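(* Let $\gamma,z\in\mathbb{R}$ with $1+\gamma z>0$, and let $D(\gamma,z)=\int_0^z\frac{t}{(1+\gamma t)^2}\,dt$. If $\gamma z>0$, then \[D(\gamma,z)\le\frac{z^2}{2}\quad\text{and}\quad D(\gamma,z)\le\frac1\gamma\log(1+\gamma z)\frac{z}{1+\gamma z}\le\min\Big\{\frac{z^2}{1+\gamma z},\ \frac1{\gamma^2}\log(1+\gamma z)\Big\}.\] If $-1<\gamma z<0$, then $D(\gamma,z)\le\frac{z^2}{1+\gamma z}$. Consequently, for all $\gamma,z$ with $1+\gamma z>0$, $0\le D(\gamma,z)\le \frac{z^2}{1+\gamma z}$.
   Context: $D(\gamma,z)$ equals $\partial_\gamma\log u_\gamma(z)$, where $u_\gamma(z)=\exp(-\int_0^z(1+\gamma t)^{-1}dt)$, i.e. $(1+\gamma z)^{-1/\gamma}$ for $\gamma\ne0$ and $e^{-z}$ for $\gamma=0$. *)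

theory Defs
  imports "HOL-Analysis.Analysis"
begin

definition D :: "real \<Rightarrow> real \<Rightarrow> real" where
  "D \<gamma> z = (if 0 \<le> z then integral {0..z} (\<lambda>t. t / (1 + \<gamma> * t)^2)
              else - integral {z..0} (\<lambda>t. t / (1 + \<gamma> * t)^2))"

end

theory Submission
  imports Defs
begin

text \<open>
  The integrand has the explicit primitive \<open>(ln (1 + \<gamma> t) + 1 / (1 + \<gamma> t)) / \<gamma>\<^sup>2\<close>, so for
  \<open>\<gamma> \<noteq> 0\<close> and \<open>u = \<gamma> z\<close> one has \<open>\<gamma>\<^sup>2 D(\<gamma>, z) = ln (1 + u) - u / (1 + u)\<close>.
  Every claimed bound, after multiplying by \<open>\<gamma>\<^sup>2\<close>, becomes an elementary inequality
  in \<open>u > -1\<close>, which follows from \<open>u / (1 + u) \<le> ln (1 + u) \<le> u\<close>, except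
  \<open>ln (1 + u) - u / (1 + u) \<le> u\<^sup>2 / 2\<close> for \<open>u \<ge> 0\<close>, which is a monotonicity argument.
\<close>

definition D_primitive :: "real \<Rightarrow> real \<Rightarrow> real" where
  "D_primitive \<gamma> t =
     (if \<gamma> = 0 then t\<^sup>2 / 2 else (ln (1 + \<gamma> * t) + 1 / (1 + \<gamma> * t)) / \<gamma>\<^sup>2)"

lemma has_real_derivative_D_primitive:
  assumes "1 + \<gamma> * t > 0"
  shows "(D_primitive \<gamma> has_real_derivative t / (1 + \<gamma> * t)\<^sup>2) (at t)"
proof (cases "\<gamma> = 0")
  case True
  have "((\<lambda>t. t\<^sup>2 / 2) has_real_derivative t) (at t)"
    by (auto intro!: derivative_eq_intros)
  then show ?thesis
    using True by (simp add: D_primitive_def[abs_def])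
next
  case False
  have "((\<lambda>t. (ln (1 + \<gamma> * t) + 1 / (1 + \<gamma> * t)) / \<gamma>\<^sup>2) has_real_derivative
          (\<gamma> / (1 + \<gamma> * t) - \<gamma> / (1 + \<gamma> * t)\<^sup>2) / \<gamma>\<^sup>2) (at t)"
    using assms False by (auto intro!: derivative_eq_intros simp: power2_eq_square)
  moreover have "(\<gamma> / w - \<gamma> / w\<^sup>2) / \<gamma>\<^sup>2 = ((w - 1) / \<gamma>) / w\<^sup>2" if "w > 0" for w
    using that False by (simp add: field_simps power2_eq_square)
  moreover have "D_primitive \<gamma> = (\<lambda>t. (ln (1 + \<gamma> * t) + 1 / (1 + \<gamma> * t)) / \<gamma>\<^sup>2)"
    using False by (simp add: D_primitive_def[abs_def])
  ultimately show ?thesis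
    using assms False by (simp del: divide_divide_eq_left)
qed

lemma integral_D_integrand:
  assumes "a \<le> b" and "\<And>t. t \<in> {a..b} \<Longrightarrow> 1 + \<gamma> * t > 0"
  shows "integral {a..b} (\<lambda>t. t / (1 + \<gamma> * t)\<^sup>2) = D_primitive \<gamma> b - D_primitive \<gamma> a"
proof (rule integral_unique, rule fundamental_theorem_of_calculus[OF assms(1)])
  fix t assume "t \<in> {a..b}"
  then show "(D_primitive \<gamma> has_vector_derivative t / (1 + \<gamma> * t)\<^sup>2) (at t within {a..b})"
    using has_real_derivative_D_primitive assms(2)
    by (metis has_field_derivative_at_within has_real_derivative_iff_has_vector_derivative)
qed

lemma one_plus_mult_pos_on_segment:
  fixes \<gamma> z t :: real
  assumes "1 + \<gamma> * z > 0" and "t \<in> closed_segment 0 z"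
  shows "1 + \<gamma> * t > 0"
proof -
  obtain s where s: "0 \<le> s" "s \<le> 1" "t = s * z"
    using assms(2) by (auto simp: closed_segment_def)
  have "1 + \<gamma> * t = (1 - s) + s * (1 + \<gamma> * z)"
    using s(3) by (simp add: algebra_simps)
  also have "\<dots> > 0"
    using s(1,2) assms(1) by (cases "s = 0") (auto intro: add_nonneg_pos)
  finally show ?thesis .
qed

lemma D_eq_D_primitive:
  assumes "1 + \<gamma> * z > 0"
  shows "D \<gamma> z = D_primitive \<gamma> z - D_primitive \<gamma> 0"
  using integral_D_integrand[of 0 z \<gamma>] integral_D_integrand[of z 0 \<gamma>]
    one_plus_mult_pos_on_segment[OF assms]
  by (auto simp: D_def closed_segment_eq_real_ivl split: if_splits)

lemma D_zero_left: "D 0 z = z\<^sup>2 / 2"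
  using D_eq_D_primitive[of 0 z] by (simp add: D_primitive_def)

lemma D_eq_ln:
  assumes "1 + \<gamma> * z > 0" and "\<gamma> \<noteq> 0"
  shows "D \<gamma> z = (ln (1 + \<gamma> * z) - \<gamma> * z / (1 + \<gamma> * z)) / \<gamma>\<^sup>2"
proof -
  have "D \<gamma> z = (ln (1 + \<gamma> * z) + (1 / (1 + \<gamma> * z) - 1)) / \<gamma>\<^sup>2"
    using D_eq_D_primitive[OF assms(1)] assms(2)
    by (simp add: D_primitive_def diff_divide_distrib add_divide_distrib)
  moreover have "1 / (1 + \<gamma> * z) - 1 = - (\<gamma> * z / (1 + \<gamma> * z))"
    using assms(1) by (simp add: field_simps)
  ultimately show ?thesis
    by simp
qed

lemma ln_one_plus_minus_frac_nonneg:
  fixes u :: real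
  assumes "u > -1"
  shows "0 \<le> ln (1 + u) - u / (1 + u)"
proof -
  have "ln (1 / (1 + u)) \<le> 1 / (1 + u) - 1"
    using assms by (intro ln_le_minus_one) auto
  moreover have "ln (1 / (1 + u)) = - ln (1 + u)"
    using assms by (simp add: ln_div)
  moreover have "1 / (1 + u) - 1 = - (u / (1 + u))"
    using assms by (simp add: field_simps)
  ultimately show ?thesis
    by linarith
qed

lemma ln_one_plus_minus_frac_le_ln_mult_frac:
  fixes u :: real
  assumes "u > -1"
  shows "ln (1 + u) - u / (1 + u) \<le> ln (1 + u) * (u / (1 + u))"
proof -
  have "ln (1 + u) - u / (1 + u) = (ln (1 + u) * (1 + u) - u) / (1 + u)"
    using assms by (simp add: field_simps)
  also have "\<dots> \<le> ln (1 + u) * u / (1 + u)"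
    using ln_add_one_self_le_self2[OF assms] assms by (intro divide_right_mono) (auto simp: algebra_simps)
  finally show ?thesis
    by simp
qed

lemma ln_one_plus_minus_frac_le_square_frac:
  fixes u :: real
  assumes "u > -1"
  shows "ln (1 + u) - u / (1 + u) \<le> u\<^sup>2 / (1 + u)"
proof -
  have "ln (1 + u) - u / (1 + u) = (ln (1 + u) * (1 + u) - u) / (1 + u)"
    using assms by (simp add: field_simps)
  also have "\<dots> \<le> (u * (1 + u) - u) / (1 + u)"
    using ln_add_one_self_le_self2[OF assms] assms by (intro divide_right_mono) auto
  also have "\<dots> = u\<^sup>2 / (1 + u)"
    by (simp add: algebra_simps power2_eq_square)
  finally show ?thesis .
qed

lemma ln_one_plus_minus_frac_le_half_square:
  fixes u :: real
  assumes "u \<ge> 0"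
  shows "ln (1 + u) - u / (1 + u) \<le> u\<^sup>2 / 2"
proof -
  let ?h = "\<lambda>u::real. u\<^sup>2 / 2 - ln (1 + u) + u / (1 + u)"
  have "?h 0 \<le> ?h u"
  proof (rule DERIV_nonneg_imp_nondecreasing[OF assms])
    fix x :: real assume x: "0 \<le> x" "x \<le> u"
    have "(?h has_real_derivative x - 1 / (1 + x) + 1 / (1 + x)\<^sup>2) (at x)"
      using x by (auto intro!: derivative_eq_intros simp: power2_eq_square field_simps)
    moreover have "x - 1 / w + 1 / w\<^sup>2 = x - x / w\<^sup>2" if "w > 0" "x = w - 1" for w
      using that by (simp add: field_simps power2_eq_square)
    then have "x - 1 / (1 + x) + 1 / (1 + x)\<^sup>2 = x - x / (1 + x)\<^sup>2"
      using x by simp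
    moreover have "x / (1 + x)\<^sup>2 \<le> x"
      using x by (simp add: divide_le_eq one_le_power mult_le_cancel_left1)
    ultimately show "\<exists>y. (?h has_real_derivative y) (at x) \<and> 0 \<le> y"
      by (metis diff_ge_0_iff_ge)
  qed
  then show ?thesis
    by simp
qed

lemma ln_mult_frac_le_square_frac:
  fixes u :: real
  assumes "u \<ge> 0"
  shows "ln (1 + u) * (u / (1 + u)) \<le> u\<^sup>2 / (1 + u)"
  using mult_right_mono[OF ln_add_one_self_le_self[OF assms], of "u / (1 + u)"] assms
  by (simp add: power2_eq_square)

lemma ln_mult_frac_le_ln:
  fixes u :: real
  assumes "u \<ge> 0"
  shows "ln (1 + u) * (u / (1 + u)) \<le> ln (1 + u)"
  using mult_left_le[of "u / (1 + u)" "ln (1 + u)"] assms by simp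

theorem lemmaB1:
  fixes \<gamma> z :: real
  assumes "1 + \<gamma> * z > 0"
  shows "(\<gamma> * z > 0 \<longrightarrow>
            D \<gamma> z \<le> z^2 / 2 \<and>
            D \<gamma> z \<le> (1 / \<gamma>) * ln (1 + \<gamma> * z) * (z / (1 + \<gamma> * z)) \<and>
            (1 / \<gamma>) * ln (1 + \<gamma> * z) * (z / (1 + \<gamma> * z))
              \<le> min (z^2 / (1 + \<gamma> * z)) ((1 / \<gamma>^2) * ln (1 + \<gamma> * z)))
       \<and> (-1 < \<gamma> * z \<and> \<gamma> * z < 0 \<longrightarrow> D \<gamma> z \<le> z^2 / (1 + \<gamma> * z))
       \<and> (0 \<le> D \<gamma> z \<and> D \<gamma> z \<le> z^2 / (1 + \<gamma> * z))"
proof (cases "\<gamma> = 0")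
  case True
  then show ?thesis
    by (simp add: D_zero_left)
next
  case False
  define u where "u = \<gamma> * z"
  have u: "u > -1"
    using assms by (simp add: u_def)
  have scale: "a / \<gamma>\<^sup>2 \<le> b / \<gamma>\<^sup>2" if "a \<le> b" for a b
    using that by (simp add: divide_right_mono)
  have D_u: "D \<gamma> z = (ln (1 + u) - u / (1 + u)) / \<gamma>\<^sup>2"
    using D_eq_ln[OF assms False] by (simp add: u_def)
  have "z\<^sup>2 = u\<^sup>2 / \<gamma>\<^sup>2"
    using False by (simp add: u_def field_simps)
  then have half_square: "z\<^sup>2 / 2 = (u\<^sup>2 / 2) / \<gamma>\<^sup>2"
    and square_frac: "z\<^sup>2 / (1 + u) = (u\<^sup>2 / (1 + u)) / \<gamma>\<^sup>2"
    by simp_all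
  have "(1 / \<gamma>) * L * (z / w) = L * (u / w) / \<gamma>\<^sup>2" if "w \<noteq> 0" for L w
    using that False by (simp add: u_def field_simps power2_eq_square)
  then have ln_mult_frac: "(1 / \<gamma>) * ln (1 + u) * (z / (1 + u)) = ln (1 + u) * (u / (1 + u)) / \<gamma>\<^sup>2"
    using u by simp
  have min_scaled: "min (a / \<gamma>\<^sup>2) ((1 / \<gamma>\<^sup>2) * b) = min a b / \<gamma>\<^sup>2" for a b
    by (simp add: min_divide_distrib_right)
  show ?thesis
    unfolding u_def[symmetric] D_u half_square square_frac ln_mult_frac min_scaled
    using False ln_one_plus_minus_frac_nonneg[OF u] ln_one_plus_minus_frac_le_square_frac[OF u]
      ln_one_plus_minus_frac_le_ln_mult_frac[OF u] ln_one_plus_minus_frac_le_half_square[of u]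
      ln_mult_frac_le_square_frac[of u] ln_mult_frac_le_ln[of u]
    by (intro conjI impI scale divide_nonneg_pos) auto
qed

end
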